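(* The map $E\mapsto\mathfrak m_E$ from $[0,+\infty)$ to the space $\mathcal M_c(\mathbb R)$ of compactly supported Radon measures on $\mathbb R$ is weakly-* continuous: for every $\varphi\in C^0(\mathbb R)$ and every $E_0\in[0,+\infty)$, $$\langle\mathfrak m_E,\varphi\rangle\to\langle\mathfrak m_{E_0},\varphi\rangle\quad\text{as }E\to E_0\ (\text{as }E\to0^+\text{ if }E_0=0).$$
   Context: Let $V(x)=(x^2/2-1)^2$, $x_+(E)=\sqrt{2+2\sqrt E}$ for $E\ge0$, $x_-(E)=\sqrt{2-2\sqrt E}$ for $E\in[0,1]$ and $x_-(E)=0$ for $E\ge1$. For $E\in(0,1)\cup(1,\infty)$ let $C(E)=\left(\int_{x_-(E)}^{x_+(E)}(E-V(x))^{-1/2}dx\right)^{-1}$. Define the measures: $\mathfrak m_0=\frac12(\delta_{-\sqrt2}+\delta_{\sqrt2})$; for $E\in(0,1)$, $\mathfrak m_E=\frac{C(E)}2\frac{\mathbf 1_{[-x_+(E),-x_-(E)]}(x)\,dx}{\sqrt{E-V(x)}}+\frac{C(E)}2\frac{\mathbf 1_{[x_-(E),x_+(E)]}(x)\,dx}{\sqrt{E-V(x)}}$; $\mathfrak m_1=\delta_0$; for $E>1$, $\mathfrak m_E=\frac{C(E)}2\frac{\mathbf 1_{[-x_+(E),x_+(E)]}(x)\,dx}{\sqrt{E-V(x)}}$. *)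

theory Defs
  imports "HOL-Probability.Probability"
begin

definition V :: "real \<Rightarrow> real" where
  "V x = (x^2 / 2 - 1)^2"

definition xplus :: "real \<Rightarrow> real" where
  "xplus E = sqrt (2 + 2 * sqrt E)"

definition xminus :: "real \<Rightarrow> real" where
  "xminus E = (if E \<le> 1 then sqrt (2 - 2 * sqrt E) else 0)"

definition Cnorm :: "real \<Rightarrow> real" where
  "Cnorm E = inverse (LBINT x=xminus E..xplus E. 1 / sqrt (E - V x))"

definition mE :: "real \<Rightarrow> real measure" where
  "mE E =
    (if E = 0 then measure_pmf (pmf_of_set {- sqrt 2, sqrt 2})
     else if E = 1 then measure_pmf (return_pmf 0)
     else if E < 1 then
       density lborel (\<lambda>x. ennreal
         (Cnorm E / 2 * indicator {- xplus E .. - xminus E} x / sqrt (E - V x)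
        + Cnorm E / 2 * indicator {xminus E .. xplus E} x / sqrt (E - V x)))
     else
       density lborel (\<lambda>x. ennreal
         (Cnorm E / 2 * indicator {- xplus E .. xplus E} x / sqrt (E - V x))))"

end

theory Submission
  imports Defs
begin

text \<open>
  Write \<open>E = s\<^sup>2\<close>. On the energy shell the substitution \<open>x = sqrt (2 + 2 s sin t)\<close>
  turns \<open>dx / sqrt (E - V x)\<close> into \<open>dt / x\<close>, so that for \<open>E \<noteq> 1\<close> the integral
  \<open>\<langle>m\<^sub>E, \<phi>\<rangle>\<close> becomes a ratio of integrals of continuous functions of \<open>(s, t)\<close> over a
  fixed compact interval; this gives continuity on \<open>[0, 1)\<close> and on \<open>(1, \<infinity>)\<close>, and at
  \<open>s = 0\<close> the integrand is constant in \<open>t\<close>, which produces the two atoms of \<open>m\<^sub>0\<close>.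
  At the separatrix energy \<open>E = 1\<close> the normalising integral diverges like
  \<open>- ln \<bar>E - 1\<bar> / 2\<close>, since the orbit spends a long time near the hyperbolic point \<open>0\<close>,
  whereas for \<open>\<phi>\<close> vanishing at \<open>0\<close> and bounded by \<open>\<eta>\<close> near \<open>0\<close> the unnormalised
  integral is at most \<open>\<eta>\<close> times the normalising one plus a bounded term.
\<close>

lemma one_minus_cos_le: "1 - cos u \<le> u\<^sup>2 / 2" for u :: real
proof -
  have "\<bar>sin (u / 2)\<bar> \<le> \<bar>u / 2\<bar>"
    by (rule abs_sin_x_le_abs_x)
  then have "(sin (u / 2))\<^sup>2 \<le> (u / 2)\<^sup>2"
    by (simp only: abs_le_square_iff)
  then show ?thesis
    using cos_double_sin[of "u / 2"] by (simp add: power_divide)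
qed

lemma set_integrable_reflect:
  fixes f :: "real \<Rightarrow> 'a::{banach, second_countable_topology}"
  assumes "set_integrable lborel {a..b} (\<lambda>x. f (- x))"
  shows "set_integrable lborel {- b..- a} f"
proof -
  have "(\<lambda>x. indicator {- b..- a} (0 + - 1 * x) *\<^sub>R f (0 + - 1 * x))
      = (\<lambda>x. indicator {a..b} x *\<^sub>R f (- x))"
    by (auto simp: indicator_def fun_eq_iff)
  then show ?thesis
    using assms lborel_integrable_real_affine_iff[of "- 1" "\<lambda>x. indicator {- b..- a} x *\<^sub>R f x" 0]
    by (simp add: set_integrable_def)
qed

lemma tendsto_at_within_of_continuous_on_open_Int:
  assumes g: "continuous_on (S \<inter> T) g" and T: "open T" "x \<in> S \<inter> T"
    and fg: "\<And>y. y \<in> S \<inter> T \<Longrightarrow> f y = g y"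
  shows "(f \<longlongrightarrow> f x) (at x within S)"
proof -
  have "at x within S = at x within (S \<inter> T)"
    using T by (intro at_within_nhd[of x T]) auto
  moreover have "(g \<longlongrightarrow> g x) (at x within (S \<inter> T))"
    using g T by (simp add: continuous_on_def)
  moreover have "eventually (\<lambda>y. g y = f y) (at x within (S \<inter> T))"
    using fg by (auto simp: eventually_at_filter)
  ultimately show ?thesis
    using fg[OF T(2)] by (auto intro: Lim_transform_eventually)
qed

lemma abs_mult_weight_le:
  fixes v y w :: real
  assumes w: "0 \<le> w" "y * w \<le> B" and B: "0 \<le> B" and \<epsilon>: "0 < \<epsilon>" and \<eta>: "0 \<le> \<eta>"
    and M: "\<bar>v\<bar> \<le> M" and small: "y < \<epsilon> \<Longrightarrow> \<bar>v\<bar> \<le> \<eta>"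
  shows "\<bar>v\<bar> * w \<le> \<eta> * w + M * B / \<epsilon>"
proof (cases "y < \<epsilon>")
  case True
  then have "\<bar>v\<bar> * w \<le> \<eta> * w"
    using small w by (intro mult_right_mono) auto
  moreover have "0 \<le> M * B / \<epsilon>"
    using M B \<epsilon> by simp
  ultimately show ?thesis
    by linarith
next
  case False
  have "\<epsilon> * (\<bar>v\<bar> * w) \<le> y * (M * w)"
    using False M w \<epsilon> by (intro mult_mono) auto
  also have "\<dots> = M * (y * w)"
    by (simp add: algebra_simps)
  also have "\<dots> \<le> M * B"
    using w M by (intro mult_left_mono) auto
  finally have "\<bar>v\<bar> * w \<le> M * B / \<epsilon>"
    using \<epsilon> by (simp add: field_simps)
  moreover have "0 \<le> \<eta> * w"
    using \<eta> w by simp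
  ultimately show ?thesis
    by linarith
qed

lemma abs_integral_le_weighted:
  fixes f w :: "real \<Rightarrow> real"
  assumes "a \<le> b" "f integrable_on {a..b}" "w integrable_on {a..b}"
    and le: "\<And>t. t \<in> {a..b} \<Longrightarrow> \<bar>f t\<bar> \<le> \<eta> * w t + C"
  shows "\<bar>integral {a..b} f\<bar> \<le> \<eta> * integral {a..b} w + C * (b - a)"
proof -
  have int: "(\<lambda>t. \<eta> * w t) integrable_on {a..b}"
    using assms(3) by (rule integrable_on_mult_right)
  have "norm (integral {a..b} f) \<le> integral {a..b} (\<lambda>t. \<eta> * w t + C)"
    using le by (intro integral_norm_bound_integral assms(2) integrable_add int) auto
  also have "\<dots> = \<eta> * integral {a..b} w + C * (b - a)"
    unfolding integral_add[OF int integrable_const_ivl] integral_mult[OF assms(3), symmetric]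
    using assms(1) by simp
  finally show ?thesis
    by simp
qed

lemma neg_ln_le_integral_inverse:
  fixes w :: "real \<Rightarrow> real"
  assumes d: "0 < d" and ab: "a + 1 \<le> b" and w_int: "(\<lambda>t. 1 / w t) integrable_on {a..b}"
    and w: "\<And>t. t \<in> {a..b} \<Longrightarrow> 0 < w t \<and> w t \<le> d + (t - a)"
  shows "- ln d \<le> integral {a..b} (\<lambda>t. 1 / w t)"
proof -
  have "((\<lambda>t. 1 / (d + (t - a))) has_integral (ln (d + (b - a)) - ln (d + (a - a)))) {a..b}"
  proof (rule fundamental_theorem_of_calculus)
    fix t assume "t \<in> {a..b}"
    then have "0 < d + (t - a)"
      using d by auto
    then show "((\<lambda>t. ln (d + (t - a))) has_vector_derivative 1 / (d + (t - a))) (at t within {a..b})"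
      unfolding has_real_derivative_iff_has_vector_derivative[symmetric]
      by (auto intro!: derivative_eq_intros)
  qed (use ab in auto)
  then have "ln (d + (b - a)) - ln d \<le> integral {a..b} (\<lambda>t. 1 / w t)"
    using w_int w d by (intro has_integral_le[OF _ integrable_integral]) (auto intro!: divide_left_mono)
  moreover have "0 \<le> ln (d + (b - a))"
    using d ab by simp
  ultimately show ?thesis
    by linarith
qed

section \<open>The double-well potential\<close>

lemma V_minus [simp]: "V (- x) = V x"
  by (simp add: V_def)

lemma V_measurable [measurable]: "V \<in> borel_measurable borel"
  unfolding V_def by measurable

lemma V_le_1:
  assumes "\<bar>x\<bar> \<le> sqrt 2"
  shows "V x \<le> 1"
proof -
  have "x\<^sup>2 \<le> 2"
    using power_mono[OF assms, of 2] by simp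
  then have "\<bar>x\<^sup>2 / 2 - 1\<bar> \<le> 1"
    by simp
  then show ?thesis
    unfolding V_def by (simp add: abs_square_le_1)
qed

lemma V_le_on_orbit:
  assumes "0 \<le> E" "xminus E \<le> \<bar>x\<bar>" "\<bar>x\<bar> \<le> xplus E"
  shows "V x \<le> E"
proof -
  define s where "s = sqrt E"
  have s: "0 \<le> s" "s\<^sup>2 = E"
    using assms by (auto simp: s_def)
  have "\<bar>x\<bar>\<^sup>2 \<le> (xplus E)\<^sup>2"
    by (rule power_mono) (use assms in auto)
  then have upper: "x\<^sup>2 / 2 - 1 \<le> s"
    using assms by (simp add: xplus_def s_def)
  have lower: "- s \<le> x\<^sup>2 / 2 - 1"
  proof (cases "E \<le> 1")
    case True
    have "(xminus E)\<^sup>2 \<le> \<bar>x\<bar>\<^sup>2"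
      by (rule power_mono) (use assms in \<open>auto simp: xminus_def\<close>)
    then show ?thesis
      using True assms by (simp add: xminus_def s_def)
  next
    case False
    then have "1 \<le> s"
      by (simp add: s_def)
    then show ?thesis
      using zero_le_power2[of x] by linarith
  qed
  have "(x\<^sup>2 / 2 - 1)\<^sup>2 \<le> s\<^sup>2"
    using upper lower by (simp add: abs_le_square_iff[symmetric] abs_le_iff s(1))
  then show ?thesis
    using s by (simp add: V_def)
qed

section \<open>Angle parametrisation of the orbits\<close>

definition x_of_angle :: "real \<Rightarrow> real \<Rightarrow> real" where
  "x_of_angle s t = sqrt (2 + 2 * s * sin t)"

lemma V_x_of_angle:
  assumes "0 \<le> 2 + 2 * s * sin t"
  shows "V (x_of_angle s t) = (s * sin t)\<^sup>2"
  using assms by (simp add: V_def x_of_angle_def add_divide_distrib)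

lemma energy_minus_V_x_of_angle:
  assumes "0 \<le> 2 + 2 * s * sin t"
  shows "s\<^sup>2 - V (x_of_angle s t) = (s * cos t)\<^sup>2"
  using V_x_of_angle[OF assms] by (simp add: cos_squared_eq algebra_simps)

lemma radicand_pos_of_lt_1:
  fixes s t :: real
  assumes "0 \<le> s" "s < 1"
  shows "0 < 2 + 2 * s * sin t"
proof -
  have "- s \<le> s * sin t"
    using assms(1) mult_left_mono[OF sin_ge_minus_one[of t], of s] by simp
  then show ?thesis using assms(2) by linarith
qed

lemma radicand_pos_of_sin_nonneg:
  fixes s t :: real
  assumes "0 \<le> s" "0 \<le> sin t"
  shows "0 < 2 + 2 * s * sin t"
  using assms by (simp add: add_pos_nonneg)

lemma radicand_pos_mono:
  assumes "0 \<le> s" "- (pi/2) \<le> a" "a \<le> t" "t \<le> pi/2" "0 < 2 + 2 * s * sin a"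
  shows "0 < 2 + 2 * s * sin t"
proof -
  have "s * sin a \<le> s * sin t"
    using assms by (intro mult_left_mono sin_monotone_2pi_le) auto
  then show ?thesis using assms(5) by linarith
qed

lemma x_of_angle_mono:
  assumes "0 \<le> s" "- (pi/2) \<le> a" "a \<le> b" "b \<le> pi/2"
  shows "x_of_angle s a \<le> x_of_angle s b"
  unfolding x_of_angle_def using assms by (auto intro!: mult_left_mono sin_monotone_2pi_le)

lemma x_of_angle_le_linear:
  assumes s: "0 \<le> s" "s \<le> 1" and t: "- (pi/2) \<le> t"
  shows "x_of_angle s t \<le> sqrt (2 * (1 - s)) + (t + pi/2)"
proof -
  define u where "u = t + pi/2"
  have "2 + 2 * s * sin t = 2 * (1 - s) + 2 * s * (1 - cos u)"
    by (simp add: u_def cos_add algebra_simps)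
  also have "\<dots> \<le> 2 * (1 - s) + u\<^sup>2"
    using s one_minus_cos_le[of u] mult_right_mono[of s 1 "1 - cos u"] by simp
  also have "\<dots> \<le> (sqrt (2 * (1 - s)) + u)\<^sup>2"
    using s t by (simp add: power2_sum u_def)
  finally show ?thesis
    using s t unfolding x_of_angle_def u_def by (intro real_le_lsqrt) auto
qed

lemma continuous_on_angle_integrand:
  assumes f: "continuous_on UNIV f"
    and pos: "\<And>s t. (s, t) \<in> S \<Longrightarrow> 0 < 2 + 2 * s * sin t"
  shows "continuous_on S (\<lambda>(s, t). f (x_of_angle s t) / x_of_angle s t)"
proof -
  have "continuous_on S (\<lambda>p. x_of_angle (fst p) (snd p))"
    unfolding x_of_angle_def by (intro continuous_intros)
  moreover have "x_of_angle (fst p) (snd p) \<noteq> 0" if "p \<in> S" for p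
    using pos[of "fst p" "snd p"] that by (simp add: x_of_angle_def)
  ultimately show ?thesis
    unfolding case_prod_beta by (intro continuous_on_divide continuous_on_compose2[OF f]) auto
qed

lemma continuous_on_angle_integrand_fixed:
  assumes f: "continuous_on UNIV f"
    and pos: "\<And>t. t \<in> T \<Longrightarrow> 0 < 2 + 2 * s * sin t"
  shows "continuous_on T (\<lambda>t. f (x_of_angle s t) / x_of_angle s t)"
proof -
  have "continuous_on T (x_of_angle s)"
    unfolding x_of_angle_def by (intro continuous_intros)
  moreover have "x_of_angle s t \<noteq> 0" if "t \<in> T" for t
    using pos[OF that] by (simp add: x_of_angle_def)
  ultimately show ?thesis
    by (intro continuous_on_divide continuous_on_compose2[OF f]) auto
qed

definition angle_integral :: "real \<Rightarrow> real \<Rightarrow> real \<Rightarrow> (real \<Rightarrow> real) \<Rightarrow> real" where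
  "angle_integral a b s f = integral {a..b} (\<lambda>t. f (x_of_angle s t) / x_of_angle s t)"

lemma continuous_on_angle_integral:
  assumes f: "continuous_on UNIV f"
    and pos: "\<And>s t. s \<in> U \<Longrightarrow> t \<in> {a..b} \<Longrightarrow> 0 < 2 + 2 * s * sin t"
  shows "continuous_on U (\<lambda>s. angle_integral a b s f)"
  using integral_continuous_on_param[OF continuous_on_angle_integrand[OF f, of "U \<times> cbox a b"]] pos
  by (simp add: angle_integral_def)

lemma angle_integral_one_ge:
  assumes s: "0 \<le> s" and ab: "a \<le> b" and pos: "\<And>t. t \<in> {a..b} \<Longrightarrow> 0 < 2 + 2 * s * sin t"
  shows "(b - a) / sqrt (2 + 2 * s) \<le> angle_integral a b s (\<lambda>_. 1)"
proof -
  have "1 / sqrt (2 + 2 * s) \<le> 1 / x_of_angle s t" if "t \<in> {a..b}" for t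
    using pos[OF that] s mult_left_le[OF sin_le_one[of t] s]
    by (intro divide_left_mono) (auto simp: x_of_angle_def)
  then have "integral {a..b} (\<lambda>_. 1 / sqrt (2 + 2 * s)) \<le> angle_integral a b s (\<lambda>_. 1)"
    unfolding angle_integral_def using pos
    by (intro integral_le integrable_continuous_interval continuous_on_angle_integrand_fixed) auto
  then show ?thesis
    using ab by simp
qed

lemma angle_integral_one_pos:
  assumes "0 \<le> s" "a < b" "\<And>t. t \<in> {a..b} \<Longrightarrow> 0 < 2 + 2 * s * sin t"
  shows "0 < angle_integral a b s (\<lambda>_. 1)"
proof -
  have "0 < (b - a) / sqrt (2 + 2 * s)"
    using assms by (simp add: add_pos_nonneg)
  also have "\<dots> \<le> angle_integral a b s (\<lambda>_. 1)"
    using assms by (intro angle_integral_one_ge) auto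
  finally show ?thesis .
qed

lemma angle_integral_abs_le:
  fixes f :: "real \<Rightarrow> real"
  assumes s: "0 \<le> s" "s < 2" and ab: "a \<le> b" and pos: "\<And>t. t \<in> {a..b} \<Longrightarrow> 0 < 2 + 2 * s * sin t"
    and f: "continuous_on UNIV f" and \<epsilon>: "0 < \<epsilon>" and \<eta>: "0 \<le> \<eta>"
    and M: "\<And>y. y \<in> {0..3} \<Longrightarrow> \<bar>f y\<bar> \<le> M" and small: "\<And>y. y \<in> {0..<\<epsilon>} \<Longrightarrow> \<bar>f y\<bar> \<le> \<eta>"
  shows "\<bar>angle_integral a b s f\<bar> \<le> \<eta> * angle_integral a b s (\<lambda>_. 1) + M / \<epsilon> * (b - a)"
proof -
  have "\<bar>f (x_of_angle s t) / x_of_angle s t\<bar> \<le> \<eta> * (1 / x_of_angle s t) + M / \<epsilon>"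
    if t: "t \<in> {a..b}" for t
  proof -
    define x where "x = x_of_angle s t"
    have x: "0 < x"
      using pos[OF t] by (simp add: x_def x_of_angle_def)
    have "2 + 2 * s * sin t \<le> 3\<^sup>2"
      using s mult_left_le[OF sin_le_one[of t] s(1)] by simp
    then have "x \<le> 3"
      using pos[OF t] unfolding x_def x_of_angle_def by (intro real_le_lsqrt) auto
    then have "\<bar>f x\<bar> * (1 / x) \<le> \<eta> * (1 / x) + M * 1 / \<epsilon>"
      using x \<epsilon> \<eta> M small by (intro abs_mult_weight_le) auto
    then show ?thesis
      using x by (simp add: x_def)
  qed
  then show ?thesis
    unfolding angle_integral_def using ab pos
    by (intro abs_integral_le_weighted integrable_continuous_interval
        continuous_on_angle_integrand_fixed[OF f]
        continuous_on_angle_integrand_fixed[of "\<lambda>_. 1", simplified]) auto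
qed

section \<open>Orbit integrals\<close>

lemma orbit_substitution_nonneg:
  fixes s a b :: real and \<psi> :: "real \<Rightarrow> real"
  assumes s: "0 < s" and ab: "- (pi/2) \<le> a" "a < b" "b \<le> pi/2"
    and pos_a: "0 < 2 + 2 * s * sin a"
    and \<psi>: "continuous_on UNIV \<psi>" "\<And>x. 0 \<le> \<psi> x"
  shows "set_integrable lborel (einterval (x_of_angle s a) (x_of_angle s b))
           (\<lambda>x. \<psi> x / sqrt (s\<^sup>2 - V x))"
    and "(LBINT x = x_of_angle s a..x_of_angle s b. \<psi> x / sqrt (s\<^sup>2 - V x))
           = (LBINT t = a..b. \<psi> (x_of_angle s t) / x_of_angle s t)"
proof -
  define f where "f = (\<lambda>x. \<psi> x / sqrt (s\<^sup>2 - V x))"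
  define g where "g = x_of_angle s"
  define g' where "g' t = s * cos t / g t" for t
  have pos: "0 < 2 + 2 * s * sin t" if "a \<le> t" "t \<le> b" for t
    using radicand_pos_mono[of s a t] s ab pos_a that by auto
  have g_pos: "0 < g t" if "a \<le> t" "t \<le> b" for t
    using pos[OF that] by (simp add: g_def x_of_angle_def)
  have cos_pos: "0 < cos t" if "a < t" "t < b" for t
    using ab that by (intro cos_gt_zero_pi) auto
  have cos_nonneg: "0 \<le> cos t" if "a \<le> t" "t \<le> b" for t
    using ab that by (intro cos_ge_zero) auto
  have sqrt_eq: "sqrt (s\<^sup>2 - V (g t)) = s * cos t" if "a < t" "t < b" for t
    using energy_minus_V_x_of_angle[of s t] pos[of t] s cos_pos[OF that] that by (simp add: g_def)
  have g_cont: "isCont g t" for t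
    unfolding g_def x_of_angle_def by (intro continuous_intros)
  have g_deriv: "(g has_real_derivative g' t) (at t)" if "a < t" "t < b" for t
    using pos[of t] that unfolding g_def g'_def x_of_angle_def
    by (auto intro!: derivative_eq_intros simp: field_simps)
  have integrand_eq: "f (g t) * g' t = \<psi> (g t) / g t" if "a < t" "t < b" for t
    using sqrt_eq[OF that] s cos_pos[OF that] g_pos[of t] that by (simp add: f_def g'_def)
  have "continuous_on {a..b} (\<lambda>t. \<psi> (g t) / g t)"
    unfolding g_def by (rule continuous_on_angle_integrand_fixed[OF \<psi>(1)]) (use pos in auto)
  then have "set_integrable lborel (einterval a b) (\<lambda>t. \<psi> (g t) / g t)"
    by (rule set_integrable_subset[OF borel_integrable_atLeastAtMost']) auto
  then have int: "set_integrable lborel (einterval a b) (\<lambda>t. f (g t) * g' t)"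
    by (subst set_integrable_cong[OF refl refl, of _ _ "\<lambda>t. \<psi> (g t) / g t"])
       (auto simp: integrand_eq)
  have lim_a: "((ereal \<circ> g \<circ> real_of_ereal) \<longlongrightarrow> ereal (g a)) (at_right (ereal a))"
    and lim_b: "((ereal \<circ> g \<circ> real_of_ereal) \<longlongrightarrow> ereal (g b)) (at_left (ereal b))"
    unfolding ereal_tendsto_simps1 ereal_tendsto_simps2
    using g_cont[of a] g_cont[of b] ab by (auto intro: tendsto_within_subset simp: isCont_def)
  have f_cont: "isCont f (g t)" if "a < t" "t < b" for t
  proof -
    have "0 < s\<^sup>2 - V (g t)"
      using sqrt_eq[OF that] s cos_pos[OF that] by (metis mult_pos_pos real_sqrt_gt_0_iff)
    then show ?thesis unfolding f_def V_def
      by (intro continuous_intros continuous_on_interior[OF \<psi>(1)]) auto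
  qed
  have g'_cont: "isCont g' t" if "a \<le> t" "t \<le> b" for t
    using g_cont[of t] g_pos[OF that] unfolding g'_def by (intro continuous_intros) auto
  have g'_nonneg: "0 \<le> g' t" if "a \<le> t" "t \<le> b" for t
    using g_pos[OF that] cos_nonneg[OF that] s unfolding g'_def by simp
  have f_nonneg: "0 \<le> f (g t)" if "a < t" "t < b" for t
    using sqrt_eq[OF that] \<psi>(2)[of "g t"] s cos_pos[OF that] unfolding f_def by simp
  note subst = interval_integral_substitution_nonneg[of a b g g' f, OF _ _ _ _ _ _ lim_a lim_b int]
  have hyps: "ereal a < ereal b"
    "\<And>t. ereal a < ereal t \<Longrightarrow> ereal t < ereal b \<Longrightarrow> (g has_real_derivative g' t) (at t)"
    "\<And>t. ereal a < ereal t \<Longrightarrow> ereal t < ereal b \<Longrightarrow> isCont f (g t)"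
    "\<And>t. ereal a < ereal t \<Longrightarrow> ereal t < ereal b \<Longrightarrow> isCont g' t"
    "\<And>t. ereal a < ereal t \<Longrightarrow> ereal t < ereal b \<Longrightarrow> 0 \<le> f (g t)"
    "\<And>t. ereal a \<le> ereal t \<Longrightarrow> ereal t \<le> ereal b \<Longrightarrow> 0 \<le> g' t"
    using ab g_deriv f_cont g'_cont g'_nonneg f_nonneg by auto
  show "set_integrable lborel (einterval (x_of_angle s a) (x_of_angle s b))
          (\<lambda>x. \<psi> x / sqrt (s\<^sup>2 - V x))"
    using subst(1)[OF hyps] by (simp add: f_def g_def)
  have "(LBINT x = g a..g b. f x) = (LBINT t = a..b. f (g t) * g' t)"
    using subst(2)[OF hyps] .
  also have "\<dots> = (LBINT t = a..b. \<psi> (g t) / g t)"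
    using ab by (intro interval_integral_cong) (auto simp: integrand_eq)
  finally show "(LBINT x = x_of_angle s a..x_of_angle s b. \<psi> x / sqrt (s\<^sup>2 - V x))
      = (LBINT t = a..b. \<psi> (x_of_angle s t) / x_of_angle s t)"
    by (simp add: f_def g_def)
qed

lemma orbit_substitution:
  fixes s a b :: real and \<psi> :: "real \<Rightarrow> real"
  assumes s: "0 < s" and ab: "- (pi/2) \<le> a" "a < b" "b \<le> pi/2"
    and pos_a: "0 < 2 + 2 * s * sin a"
    and \<psi>: "continuous_on UNIV \<psi>"
  shows "set_integrable lborel {x_of_angle s a..x_of_angle s b} (\<lambda>x. \<psi> x / sqrt (s\<^sup>2 - V x))"
    and "(LBINT x = x_of_angle s a..x_of_angle s b. \<psi> x / sqrt (s\<^sup>2 - V x)) = angle_integral a b s \<psi>"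
proof -
  define u v where "u = x_of_angle s a" and "v = x_of_angle s b"
  have uv: "u \<le> v" unfolding u_def v_def using s ab by (intro x_of_angle_mono) auto
  have pos: "0 < 2 + 2 * s * sin t" if "t \<in> {a..b}" for t
    using radicand_pos_mono[of s a t] s ab pos_a that by auto
  txt \<open>The substitution rule for improper integrals needs a nonnegative integrand.\<close>
  define \<psi>_pos \<psi>_neg where "\<psi>_pos = (\<lambda>x. max (\<psi> x) 0)" and "\<psi>_neg = (\<lambda>x. max (- \<psi> x) 0)"
  have parts: "\<psi> x = \<psi>_pos x - \<psi>_neg x" for x
    by (simp add: \<psi>_pos_def \<psi>_neg_def max_def)
  have cont_parts: "continuous_on UNIV \<psi>_pos" "continuous_on UNIV \<psi>_neg"
    unfolding \<psi>_pos_def \<psi>_neg_def by (intro continuous_intros \<psi>)+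
  note plus = orbit_substitution_nonneg[OF s ab pos_a cont_parts(1), folded u_def v_def]
   and minus = orbit_substitution_nonneg[OF s ab pos_a cont_parts(2), folded u_def v_def]
  have int_parts:
    "interval_lebesgue_integrable lborel u v (\<lambda>x. \<psi>_pos x / sqrt (s\<^sup>2 - V x))"
    "interval_lebesgue_integrable lborel u v (\<lambda>x. \<psi>_neg x / sqrt (s\<^sup>2 - V x))"
    using plus(1) minus(1) uv by (auto simp: interval_lebesgue_integrable_def \<psi>_pos_def \<psi>_neg_def)
  have int_angle: "interval_lebesgue_integrable lborel a b (\<lambda>t. f (x_of_angle s t) / x_of_angle s t)"
    if "continuous_on UNIV f" for f
    using ab pos by (intro interval_integrable_continuous_on continuous_on_angle_integrand_fixed that)
      auto
  have diff: "(\<lambda>x. \<psi> x / sqrt (s\<^sup>2 - V x))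
      = (\<lambda>x. \<psi>_pos x / sqrt (s\<^sup>2 - V x) - \<psi>_neg x / sqrt (s\<^sup>2 - V x))"
    by (simp add: parts diff_divide_distrib)
  have "set_integrable lborel {u<..<v} (\<lambda>x. \<psi> x / sqrt (s\<^sup>2 - V x))"
    unfolding diff using plus(1) minus(1) by (auto simp: \<psi>_pos_def \<psi>_neg_def)
  then show "set_integrable lborel {u..v} (\<lambda>x. \<psi> x / sqrt (s\<^sup>2 - V x))"
    by (subst set_integrable_discrete_difference[where X = "{u, v}" and B = "{u<..<v}"]) auto
  have "(LBINT x = u..v. \<psi> x / sqrt (s\<^sup>2 - V x))
      = (LBINT x = u..v. \<psi>_pos x / sqrt (s\<^sup>2 - V x)) - (LBINT x = u..v. \<psi>_neg x / sqrt (s\<^sup>2 - V x))"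
    unfolding diff by (rule interval_lebesgue_integral_diff(2)[OF int_parts])
  also have "\<dots> = (LBINT t = a..b. \<psi>_pos (x_of_angle s t) / x_of_angle s t)
      - (LBINT t = a..b. \<psi>_neg (x_of_angle s t) / x_of_angle s t)"
    using plus(2) minus(2) by (simp add: \<psi>_pos_def \<psi>_neg_def)
  also have "\<dots> = (LBINT t = a..b. \<psi> (x_of_angle s t) / x_of_angle s t)"
    by (simp add: parts diff_divide_distrib int_angle cont_parts)
  also have "\<dots> = angle_integral a b s \<psi>"
    unfolding angle_integral_def using ab pos
    by (intro interval_integral_eq_integral borel_integrable_atLeastAtMost'
        continuous_on_angle_integrand_fixed \<psi>) auto
  finally show "(LBINT x = u..v. \<psi> x / sqrt (s\<^sup>2 - V x)) = angle_integral a b s \<psi>" .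
qed

definition orbit_integral :: "real \<Rightarrow> (real \<Rightarrow> real) \<Rightarrow> real" where
  "orbit_integral E f = (LBINT x = xminus E..xplus E. f x / sqrt (E - V x))"

text \<open>For \<open>E > 1\<close> the angle substitution only reaches \<open>[sqrt 2, x\<^sub>+]\<close>; on the rest
  \<open>[0, sqrt 2]\<close> of the orbit the integrand is not singular and is kept as it is.\<close>

definition inner_integral :: "real \<Rightarrow> (real \<Rightarrow> real) \<Rightarrow> real" where
  "inner_integral E f = integral {0..sqrt 2} (\<lambda>x. f x / sqrt (E - V x))"

lemma continuous_on_inner_integrand:
  assumes f: "continuous_on UNIV f"
  shows "continuous_on ({1<..} \<times> {0..sqrt 2}) (\<lambda>(E, x). f x / sqrt (E - V x))"
proof -
  have "sqrt (E - V x) \<noteq> 0" if "1 < E" "0 \<le> x" "x \<le> sqrt 2" for E x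
    using V_le_1[of x] that by simp
  then show ?thesis
    unfolding case_prod_beta V_def
    by (intro continuous_intros continuous_on_compose2[OF f]) (auto simp: V_def)
qed

lemma continuous_on_inner_integrand_fixed:
  assumes "1 < E" "continuous_on UNIV f"
  shows "continuous_on {0..sqrt 2} (\<lambda>x. f x / sqrt (E - V x))"
  by (rule continuous_on_compose2[OF continuous_on_inner_integrand[OF assms(2)], of _ "Pair E",
      simplified]) (use assms(1) in \<open>auto intro: continuous_on_Pair continuous_on_id\<close>)

lemma continuous_on_inner_integral:
  assumes "continuous_on UNIV f"
  shows "continuous_on {1<..} (\<lambda>E. inner_integral E f)"
  using integral_continuous_on_param[OF continuous_on_inner_integrand[OF assms, folded cbox_interval]]
  by (simp add: inner_integral_def)

lemma inner_integral_one_nonneg: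
  assumes "1 < E"
  shows "0 \<le> inner_integral E (\<lambda>_. 1)"
proof -
  have "V x \<le> E" if "x \<in> {0..sqrt 2}" for x
    using V_le_1[of x] that assms by simp
  then show ?thesis
    unfolding inner_integral_def
    by (intro integral_nonneg integrable_continuous_interval
        continuous_on_inner_integrand_fixed[OF assms, of "\<lambda>_. 1", simplified]) auto
qed

lemma inner_integral_abs_le:
  fixes f :: "real \<Rightarrow> real"
  assumes E: "1 < E" and f: "continuous_on UNIV f" and \<epsilon>: "0 < \<epsilon>" and \<eta>: "0 \<le> \<eta>"
    and M: "\<And>y. y \<in> {0..3} \<Longrightarrow> \<bar>f y\<bar> \<le> M" and small: "\<And>y. y \<in> {0..<\<epsilon>} \<Longrightarrow> \<bar>f y\<bar> \<le> \<eta>"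
  shows "\<bar>inner_integral E f\<bar> \<le> \<eta> * inner_integral E (\<lambda>_. 1) + 2 * M / \<epsilon>"
proof -
  have "\<bar>f x / sqrt (E - V x)\<bar> \<le> \<eta> * (1 / sqrt (E - V x)) + M * sqrt 2 / \<epsilon>"
    if x: "x \<in> {0..sqrt 2}" for x
  proof -
    define r where "r = sqrt (E - V x)"
    have r: "0 < r"
      using V_le_1[of x] x E by (simp add: r_def)
    have "x\<^sup>2 \<le> 2"
      using power_mono[of x "sqrt 2" 2] x by simp
    then have "0 \<le> 2 * (E - 1) + (2 - x\<^sup>2) * x\<^sup>2 / 2"
      using E by (intro add_nonneg_nonneg) auto
    also have "\<dots> = 2 * (E - V x) - x\<^sup>2"
      by (simp add: V_def power2_eq_square field_simps)
    finally have "x\<^sup>2 \<le> 2 * (E - V x)"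
      by simp
    then have "x \<le> sqrt 2 * r"
      using x by (simp add: r_def real_le_rsqrt real_sqrt_mult[symmetric])
    then have "x * (1 / r) \<le> sqrt 2"
      using r by (simp add: field_simps)
    moreover have "x \<le> 3"
      using x real_sqrt_le_mono[of 2 9] by simp
    ultimately have "\<bar>f x\<bar> * (1 / r) \<le> \<eta> * (1 / r) + M * sqrt 2 / \<epsilon>"
      using x r \<epsilon> \<eta> M small by (intro abs_mult_weight_le) auto
    then show ?thesis
      using r by (simp add: r_def)
  qed
  then have "\<bar>inner_integral E f\<bar> \<le> \<eta> * inner_integral E (\<lambda>_. 1) + M * sqrt 2 / \<epsilon> * (sqrt 2 - 0)"
    unfolding inner_integral_def using E
    by (intro abs_integral_le_weighted integrable_continuous_interval
        continuous_on_inner_integrand_fixed[OF E f]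
        continuous_on_inner_integrand_fixed[of E "\<lambda>_. 1", simplified]) auto
  also have "M * sqrt 2 / \<epsilon> * (sqrt 2 - 0) = 2 * M / \<epsilon>"
    by simp
  finally show ?thesis .
qed

lemma orbit_integral_lt_1:
  assumes E: "0 < E" "E < 1" and f: "continuous_on UNIV f"
  shows "set_integrable lborel {xminus E..xplus E} (\<lambda>x. f x / sqrt (E - V x))"
    and "orbit_integral E f = angle_integral (- (pi/2)) (pi/2) (sqrt E) f"
proof -
  define s where "s = sqrt E"
  have s: "0 < s" "s < 1" "s\<^sup>2 = E"
    using E by (auto simp: s_def)
  have ends: "xminus E = x_of_angle s (- (pi/2))" "xplus E = x_of_angle s (pi/2)"
    using E by (simp_all add: xminus_def xplus_def x_of_angle_def s_def)
  note subst = orbit_substitution[OF s(1) _ _ _ radicand_pos_of_lt_1[OF _ s(2)] f, of "- (pi/2)" "pi/2"]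
  show "set_integrable lborel {xminus E..xplus E} (\<lambda>x. f x / sqrt (E - V x))"
    using subst(1) s by (simp add: ends)
  show "orbit_integral E f = angle_integral (- (pi/2)) (pi/2) (sqrt E) f"
    using subst(2) s by (simp add: ends orbit_integral_def s_def)
qed

lemma orbit_integral_gt_1:
  assumes E: "1 < E" and f: "continuous_on UNIV f"
  shows "set_integrable lborel {xminus E..xplus E} (\<lambda>x. f x / sqrt (E - V x))"
    and "orbit_integral E f = inner_integral E f + angle_integral 0 (pi/2) (sqrt E) f"
proof -
  define s where "s = sqrt E"
  have s: "0 < s" "s\<^sup>2 = E"
    using E by (auto simp: s_def)
  have ends: "xminus E = 0" "sqrt 2 = x_of_angle s 0" "xplus E = x_of_angle s (pi/2)"
    using E by (simp_all add: xminus_def xplus_def x_of_angle_def s_def)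
  have le: "sqrt 2 \<le> xplus E"
    using E by (simp add: xplus_def)
  then have split: "{0..xplus E} = {0..sqrt 2} \<union> {sqrt 2..xplus E}"
    using order_trans[OF real_sqrt_ge_zero[of 2]] by auto
  note outer = orbit_substitution[OF s(1) _ _ _ _ f, of 0 "pi/2", folded ends(2,3), unfolded s(2)]
  have inner: "set_integrable lborel {0..sqrt 2} (\<lambda>x. f x / sqrt (E - V x))"
    by (rule borel_integrable_atLeastAtMost'[OF continuous_on_inner_integrand_fixed[OF E f]])
  show int: "set_integrable lborel {xminus E..xplus E} (\<lambda>x. f x / sqrt (E - V x))"
    unfolding ends(1) split using inner outer(1) by (rule set_integrable_Un) auto
  have "orbit_integral E f
      = (LBINT x = xminus E..sqrt 2. f x / sqrt (E - V x))
        + (LBINT x = sqrt 2..xplus E. f x / sqrt (E - V x))"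
    unfolding orbit_integral_def
    by (rule interval_integral_sum[symmetric])
       (use int le in \<open>auto simp: ends(1) interval_lebesgue_integrable_def min_def max_def
         intro: set_integrable_subset\<close>)
  also have "\<dots> = inner_integral E f + angle_integral 0 (pi/2) (sqrt E) f"
    using outer(2) inner by (simp add: ends(1) inner_integral_def interval_integral_eq_integral s_def)
  finally show "orbit_integral E f = inner_integral E f + angle_integral 0 (pi/2) (sqrt E) f" .
qed

lemma set_integrable_orbit:
  assumes "0 < E" "E \<noteq> 1" "continuous_on UNIV f"
  shows "set_integrable lborel {xminus E..xplus E} (\<lambda>x. f x / sqrt (E - V x))"
  using orbit_integral_lt_1(1)[of E f] orbit_integral_gt_1(1)[of E f] assms by force

lemma orbit_integral_one_pos:
  assumes "0 < E" "E \<noteq> 1"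
  shows "0 < orbit_integral E (\<lambda>_. 1)"
proof (cases "E < 1")
  case True
  then show ?thesis
    using orbit_integral_lt_1(2)[of E] angle_integral_one_pos[of "sqrt E" "- (pi/2)" "pi/2"]
      radicand_pos_of_lt_1 assms by simp
next
  case False
  then have E: "1 < E"
    using assms by simp
  have "0 < angle_integral 0 (pi/2) (sqrt E) (\<lambda>_. 1)"
    using angle_integral_one_pos[of "sqrt E" 0 "pi/2"] radicand_pos_of_sin_nonneg sin_ge_zero E
    by simp
  then show ?thesis
    using orbit_integral_gt_1(2)[OF E] inner_integral_one_nonneg[OF E] by simp
qed

lemma orbit_integral_diff_const:
  assumes E: "0 < E" "E \<noteq> 1" and f: "continuous_on UNIV f"
  shows "orbit_integral E (\<lambda>x. f x - c) = orbit_integral E f - c * orbit_integral E (\<lambda>_. 1)"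
proof -
  have le: "xminus E \<le> xplus E"
    using E by (simp add: xminus_def xplus_def)
  have int: "interval_lebesgue_integrable lborel (xminus E) (xplus E) (\<lambda>x. g x / sqrt (E - V x))"
    if "continuous_on UNIV g" for g
    using set_integrable_orbit[OF E that] le
    by (auto simp: interval_lebesgue_integrable_def intro: set_integrable_subset)
  have "orbit_integral E (\<lambda>x. f x - c)
      = (LBINT x = xminus E..xplus E. f x / sqrt (E - V x) - c * (1 / sqrt (E - V x)))"
    unfolding orbit_integral_def by (simp add: diff_divide_distrib)
  also have "\<dots> = orbit_integral E f - c * orbit_integral E (\<lambda>_. 1)"
    unfolding orbit_integral_def
    using int[OF f] int[of "\<lambda>_. 1"]
    by (subst interval_lebesgue_integral_diff(2)) (auto simp del: times_divide_eq_right)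
  finally show ?thesis .
qed

lemma orbit_integral_abs_le:
  fixes f :: "real \<Rightarrow> real"
  assumes E: "0 < E" "E < 4" "E \<noteq> 1" and f: "continuous_on UNIV f" and \<epsilon>: "0 < \<epsilon>"
    and M: "\<And>y. y \<in> {0..3} \<Longrightarrow> \<bar>f y\<bar> \<le> M" and small: "\<And>y. y \<in> {0..<\<epsilon>} \<Longrightarrow> \<bar>f y\<bar> \<le> \<eta>"
  shows "\<bar>orbit_integral E f\<bar> \<le> \<eta> * orbit_integral E (\<lambda>_. 1) + 4 * M / \<epsilon>"
proof -
  have \<eta>: "0 \<le> \<eta>" and M_nonneg: "0 \<le> M"
    using small[of 0] M[of 0] \<epsilon> by auto
  define s where "s = sqrt E"
  have s: "0 < s" "s < 2"
    using E real_sqrt_less_mono[of E 4] by (auto simp: s_def)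
  note angle_le = angle_integral_abs_le[OF less_imp_le[OF s(1)] s(2) _ _ f \<epsilon> \<eta> M small]
  show ?thesis
  proof (cases "E < 1")
    case True
    have "\<bar>orbit_integral E f\<bar> \<le> \<eta> * orbit_integral E (\<lambda>_. 1) + M / \<epsilon> * pi"
      using angle_le[of "- (pi/2)" "pi/2"] radicand_pos_of_lt_1[of s] s True E f
        orbit_integral_lt_1(2)[of E] by (simp add: s_def)
    moreover have "M / \<epsilon> * pi \<le> 4 * M / \<epsilon>"
      using M_nonneg \<epsilon> pi_less_4 by (simp add: field_simps mult_left_mono)
    ultimately show ?thesis
      by linarith
  next
    case False
    then have E1: "1 < E"
      using E by simp
    have "\<bar>orbit_integral E f\<bar> \<le> \<eta> * orbit_integral E (\<lambda>_. 1) + (2 * M / \<epsilon> + M / \<epsilon> * (pi/2))"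
      using angle_le[of 0 "pi/2"] radicand_pos_of_sin_nonneg[of s] sin_ge_zero s
        inner_integral_abs_le[OF E1 f \<epsilon> \<eta> M small] orbit_integral_gt_1(2)[OF E1] f
      by (simp add: s_def algebra_simps)
    moreover have "2 * M / \<epsilon> + M / \<epsilon> * (pi/2) \<le> 4 * M / \<epsilon>"
      using M_nonneg \<epsilon> pi_less_4 by (simp add: field_simps mult_left_mono)
    ultimately show ?thesis
      by linarith
  qed
qed

lemma orbit_integral_one_ge_neg_ln:
  assumes E: "0 < E" "E \<noteq> 1"
  shows "- ln (sqrt (2 * \<bar>E - 1\<bar>)) \<le> orbit_integral E (\<lambda>_. 1)"
proof (cases "E < 1")
  case True
  define s where "s = sqrt E"
  have s: "0 < s" "s < 1" "E \<le> s"
    using E True by (auto simp: s_def real_le_rsqrt power2_eq_square mult_left_le_one_le)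
  have pos: "0 < 2 + 2 * s * sin t" for t
    using s radicand_pos_of_lt_1 by auto
  have "0 < x_of_angle s t \<and> x_of_angle s t \<le> sqrt (2 * (1 - s)) + (t - - (pi/2))"
    if "t \<in> {- (pi/2)..pi/2}" for t
    using pos[of t] s that x_of_angle_le_linear[of s t] by (simp add: x_of_angle_def)
  then have "- ln (sqrt (2 * (1 - s))) \<le> angle_integral (- (pi/2)) (pi/2) s (\<lambda>_. 1)"
    unfolding angle_integral_def using pos s pi_gt3
    by (intro neg_ln_le_integral_inverse integrable_continuous_interval
        continuous_on_angle_integrand_fixed[of "\<lambda>_. 1", simplified]) auto
  moreover have "ln (sqrt (2 * (1 - s))) \<le> ln (sqrt (2 * \<bar>E - 1\<bar>))"
    using s True by simp
  moreover have "orbit_integral E (\<lambda>_. 1) = angle_integral (- (pi/2)) (pi/2) s (\<lambda>_. 1)"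
    using orbit_integral_lt_1(2)[of E "\<lambda>_. 1"] E True by (simp add: s_def)
  ultimately show ?thesis
    by linarith
next
  case False
  then have E1: "1 < E"
    using E by simp
  have "sqrt (E - V x) \<le> sqrt (E - 1) + (x - 0)" if "x \<in> {0..sqrt 2}" for x
  proof -
    have "E - V x = (E - 1) + x\<^sup>2 - x ^ 4 / 4"
      by (simp add: V_def power2_eq_square power4_eq_xxxx field_simps)
    also have "\<dots> \<le> (sqrt (E - 1) + x)\<^sup>2"
    proof -
      have "0 \<le> x ^ 4 / 4" "0 \<le> 2 * sqrt (E - 1) * x" "(sqrt (E - 1))\<^sup>2 = E - 1"
        using E1 that by auto
      then show ?thesis
        unfolding power2_sum by linarith
    qed
    finally show ?thesis
      using E1 that by (intro real_le_lsqrt) auto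
  qed
  moreover have "0 < sqrt (E - V x)" if "x \<in> {0..sqrt 2}" for x
    using V_le_1[of x] E1 that by simp
  ultimately have "- ln (sqrt (E - 1)) \<le> inner_integral E (\<lambda>_. 1)"
    unfolding inner_integral_def using E1
    by (intro neg_ln_le_integral_inverse integrable_continuous_interval
        continuous_on_inner_integrand_fixed[of E "\<lambda>_. 1", simplified]) auto
  moreover have "ln (sqrt (E - 1)) \<le> ln (sqrt (2 * \<bar>E - 1\<bar>))"
    using E1 by simp
  moreover have "0 < angle_integral 0 (pi/2) (sqrt E) (\<lambda>_. 1)"
    using angle_integral_one_pos[of "sqrt E" 0 "pi/2"] radicand_pos_of_sin_nonneg sin_ge_zero E1
    by simp
  ultimately show ?thesis
    using orbit_integral_gt_1(2)[OF E1, of "\<lambda>_. 1"] by simp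
qed

lemma filterlim_orbit_integral_one_at_1: "filterlim (\<lambda>E. orbit_integral E (\<lambda>_. 1)) at_top (at 1)"
proof -
  have "((\<lambda>E. sqrt (2 * \<bar>E - 1\<bar>)) \<longlongrightarrow> 0) (at 1)"
    by (auto intro!: tendsto_eq_intros)
  moreover have "eventually (\<lambda>E. 0 < sqrt (2 * \<bar>E - 1\<bar>)) (at (1::real))"
    by (auto simp: eventually_at_filter)
  ultimately have "filterlim (\<lambda>E. sqrt (2 * \<bar>E - 1\<bar>)) (at_right 0) (at 1)"
    by (rule tendsto_imp_filterlim_at_right)
  then have "filterlim (\<lambda>E. - ln (sqrt (2 * \<bar>E - 1\<bar>))) at_top (at 1)"
    unfolding filterlim_uminus_at_top minus_minus by (rule filterlim_compose[OF ln_at_0])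
  moreover have "eventually (\<lambda>E. - ln (sqrt (2 * \<bar>E - 1\<bar>)) \<le> orbit_integral E (\<lambda>_. 1)) (at 1)"
    unfolding eventually_at
    by (intro exI[of _ 1]) (auto intro!: orbit_integral_one_ge_neg_ln simp: dist_real_def)
  ultimately show ?thesis
    by (rule filterlim_at_top_mono)
qed

section \<open>Continuity of the orbit measures\<close>

lemma mE_eq_density:
  assumes "0 < E" "E \<noteq> 1"
  shows "mE E = density lborel (\<lambda>x. ennreal (Cnorm E / 2
    * (indicator {- xplus E..- xminus E} x + indicator {xminus E..xplus E} x) / sqrt (E - V x)))"
proof (cases "E < 1")
  case True
  then show ?thesis
    using assms by (simp add: mE_def add_divide_distrib distrib_left)
next
  case False
  then have "xminus E = 0" "\<not> E < 1"
    using assms by (simp_all add: xminus_def)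
  moreover have "AE x in lborel. indicator {- xplus E..xplus E} x
      = (indicator {- xplus E..- 0} x + indicator {0..xplus E} x :: real)"
    using AE_lborel_singleton[of 0] by eventually_elim (auto split: split_indicator)
  ultimately show ?thesis
    using assms by (auto simp: mE_def intro!: density_cong)
qed

lemma integral_mE:
  assumes E: "0 < E" "E \<noteq> 1" and \<phi>: "continuous_on UNIV \<phi>"
  shows "integral\<^sup>L (mE E) \<phi> = orbit_integral E (\<lambda>x. \<phi> x + \<phi> (- x)) / (2 * orbit_integral E (\<lambda>_. 1))"
proof -
  define c where "c = Cnorm E / 2"
  define r where "r x = sqrt (E - V x)" for x
  define A B where "A = {- xplus E..- xminus E}" and "B = {xminus E..xplus E}"
  have c: "c = 1 / (2 * orbit_integral E (\<lambda>_. 1))"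
    by (simp add: c_def Cnorm_def orbit_integral_def inverse_eq_divide)
  have "0 \<le> c"
    using orbit_integral_one_pos[OF E] by (simp add: c)
  moreover have "0 \<le> r x" if "x \<in> A \<union> B" for x
  proof -
    have "0 \<le> xminus E"
      by (simp add: xminus_def)
    then have "xminus E \<le> \<bar>x\<bar>" "\<bar>x\<bar> \<le> xplus E"
      using that by (auto simp: A_def B_def)
    then show ?thesis
      using V_le_on_orbit[of E x] E by (simp add: r_def)
  qed
  ultimately have density_nonneg: "0 \<le> c * (indicator A x + indicator B x) / r x" for x
    by (cases "x \<in> A \<union> B") (auto split: split_indicator)
  have r_minus: "r (- x) = r x" for x
    by (simp add: r_def)
  have \<phi>_minus: "continuous_on UNIV (\<lambda>x. \<phi> (- x))"
    by (intro continuous_on_compose2[OF \<phi>] continuous_intros) auto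
  have int_B: "set_integrable lborel B (\<lambda>x. \<phi> x / r x)"
    using set_integrable_orbit[OF E \<phi>] by (simp add: B_def r_def)
  have int_B_minus: "set_integrable lborel B (\<lambda>x. \<phi> (- x) / r x)"
    using set_integrable_orbit[OF E \<phi>_minus] by (simp add: B_def r_def)
  then have int_A: "set_integrable lborel A (\<lambda>x. \<phi> x / r x)"
    unfolding A_def B_def by (intro set_integrable_reflect) (simp add: r_minus)
  have "{x. - x \<in> A} = B"
    by (auto simp: A_def B_def)
  then have reflect_A: "(LINT x:A|lborel. \<phi> x / r x) = (LINT x:B|lborel. \<phi> (- x) / r x)"
    by (subst set_integral_reflect) (simp add: r_minus)
  have [measurable]: "\<phi> \<in> borel_measurable borel"
    using \<phi> by (rule borel_measurable_continuous_onI)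
  have "(\<lambda>x. c * (indicator A x + indicator B x) / r x) \<in> borel_measurable borel"
    unfolding A_def B_def r_def by measurable
  then have "integral\<^sup>L (mE E) \<phi> = (LINT x|lborel. c * (indicator A x + indicator B x) / r x * \<phi> x)"
    unfolding mE_eq_density[OF E] c_def[symmetric] r_def[symmetric] A_def[symmetric] B_def[symmetric]
    by (subst integral_density) (auto simp: density_nonneg)
  also have "\<dots> = (LINT x|lborel. indicator A x *\<^sub>R (c * (\<phi> x / r x))
      + indicator B x *\<^sub>R (c * (\<phi> x / r x)))"
    by (rule Bochner_Integration.integral_cong) (auto split: split_indicator)
  also have "\<dots> = (LINT x:A|lborel. c * (\<phi> x / r x)) + (LINT x:B|lborel. c * (\<phi> x / r x))"
    unfolding set_lebesgue_integral_def
    by (intro Bochner_Integration.integral_add set_integrable_mult_right[unfolded set_integrable_def]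
        int_A[unfolded set_integrable_def] int_B[unfolded set_integrable_def])
  also have "\<dots> = c * ((LINT x:A|lborel. \<phi> x / r x) + (LINT x:B|lborel. \<phi> x / r x))"
    by (simp only: set_integral_mult_right distrib_left)
  also have "\<dots> = c * (LINT x:B|lborel. (\<phi> x + \<phi> (- x)) / r x)"
    unfolding reflect_A using int_B int_B_minus by (simp add: add_divide_distrib add.commute)
  also have "\<dots> = c * orbit_integral E (\<lambda>x. \<phi> x + \<phi> (- x))"
    using E by (simp add: orbit_integral_def interval_integral_Icc B_def r_def xminus_def xplus_def)
  finally show ?thesis
    by (simp add: c)
qed

lemma tendsto_integral_mE_lt_1:
  fixes \<phi> :: "real \<Rightarrow> real"
  assumes \<phi>: "continuous_on UNIV \<phi>" and E0: "0 \<le> E0" "E0 < 1"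
  shows "((\<lambda>E. integral\<^sup>L (mE E) \<phi>) \<longlongrightarrow> integral\<^sup>L (mE E0) \<phi>) (at E0 within {0..})"
proof -
  define \<psi> where "\<psi> = (\<lambda>x. \<phi> x + \<phi> (- x))"
  have \<psi>: "continuous_on UNIV \<psi>"
    unfolding \<psi>_def by (intro continuous_intros \<phi> continuous_on_compose2[OF \<phi>]) auto
  define J where "J s f = angle_integral (- (pi/2)) (pi/2) s f" for s f
  define G where "G E = J (sqrt E) \<psi> / (2 * J (sqrt E) (\<lambda>_. 1))" for E
  have pos: "0 < 2 + 2 * s * sin t" if "s \<in> {0..<1}" for s t :: real
    using that radicand_pos_of_lt_1 by auto
  have J_pos: "0 < J s (\<lambda>_. 1)" if "s \<in> {0..<1}" for s
    unfolding J_def using angle_integral_one_pos[of s "- (pi/2)" "pi/2"] pos that by auto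
  have J_cont: "continuous_on ({0..} \<inter> {..<1}) (\<lambda>E. J (sqrt E) f)" if "continuous_on UNIV f" for f
    unfolding J_def
    by (rule continuous_on_compose2[OF continuous_on_angle_integral[OF that pos, of "{0..<1}"]])
       (auto intro: continuous_on_real_sqrt continuous_on_id)
  then have "continuous_on ({0..} \<inter> {..<1}) G"
    unfolding G_def using J_pos
    by (intro continuous_on_divide continuous_on_mult continuous_on_const J_cont \<psi>)
       (auto simp: less_imp_neq[symmetric])
  moreover have "integral\<^sup>L (mE E) \<phi> = G E" if "E \<in> {0..} \<inter> {..<1}" for E
  proof (cases "E = 0")
    case True
    have "sqrt 2 \<noteq> 0" by simp
    then show ?thesis
      using True by (simp add: mE_def G_def J_def angle_integral_def x_of_angle_def integral_pmf_of_set
        \<psi>_def field_simps)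
  next
    case False
    then show ?thesis
      using that integral_mE[OF _ _ \<phi>, of E] orbit_integral_lt_1(2)[of E] \<psi>
      by (simp add: G_def J_def \<psi>_def)
  qed
  ultimately show ?thesis
    using E0 by (intro tendsto_at_within_of_continuous_on_open_Int[of _ _ G]) auto
qed

lemma tendsto_integral_mE_gt_1:
  fixes \<phi> :: "real \<Rightarrow> real"
  assumes \<phi>: "continuous_on UNIV \<phi>" and E0: "1 < E0"
  shows "((\<lambda>E. integral\<^sup>L (mE E) \<phi>) \<longlongrightarrow> integral\<^sup>L (mE E0) \<phi>) (at E0 within {0..})"
proof -
  define \<psi> where "\<psi> = (\<lambda>x. \<phi> x + \<phi> (- x))"
  have \<psi>: "continuous_on UNIV \<psi>"
    unfolding \<psi>_def by (intro continuous_intros \<phi> continuous_on_compose2[OF \<phi>]) auto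
  define K where "K E f = inner_integral E f + angle_integral 0 (pi/2) (sqrt E) f" for E f
  define G where "G E = K E \<psi> / (2 * K E (\<lambda>_. 1))" for E
  have orbit_eq: "orbit_integral E f = K E f" if "1 < E" "continuous_on UNIV f" for E f
    using orbit_integral_gt_1(2)[OF that] by (simp add: K_def)
  have K_cont: "continuous_on {1<..} (\<lambda>E. K E f)" if f: "continuous_on UNIV f" for f
  proof -
    have "continuous_on {0..} (\<lambda>s. angle_integral 0 (pi/2) s f)"
      using radicand_pos_of_sin_nonneg sin_ge_zero
      by (intro continuous_on_angle_integral[OF f]) auto
    then have "continuous_on {1<..} (\<lambda>E. angle_integral 0 (pi/2) (sqrt E) f)"
      by (rule continuous_on_compose2) (auto intro: continuous_on_real_sqrt continuous_on_id)
    then show ?thesis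
      unfolding K_def by (intro continuous_on_add continuous_on_inner_integral[OF f])
  qed
  have "K E (\<lambda>_. 1) \<noteq> 0" if "1 < E" for E
    using orbit_integral_one_pos[of E] orbit_eq[OF that] that by force
  then have "continuous_on {1<..} G"
    unfolding G_def
    by (intro continuous_on_divide continuous_on_mult continuous_on_const K_cont \<psi>) auto
  moreover have "integral\<^sup>L (mE E) \<phi> = G E" if "E \<in> {1<..}" for E
    using that integral_mE[OF _ _ \<phi>, of E] orbit_eq[of E] \<psi> by (simp add: G_def \<psi>_def)
  ultimately show ?thesis
    using E0 by (intro tendsto_at_within_of_continuous_on_open_Int[of "{0..}" "{1<..}" G])
      (auto intro: continuous_on_subset)
qed

lemma tendsto_integral_mE_at_1:
  fixes \<phi> :: "real \<Rightarrow> real"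
  assumes \<phi>: "continuous_on UNIV \<phi>"
  shows "((\<lambda>E. integral\<^sup>L (mE E) \<phi>) \<longlongrightarrow> integral\<^sup>L (mE 1) \<phi>) (at 1)"
proof -
  define f where "f = (\<lambda>x. \<phi> x + \<phi> (- x) - 2 * \<phi> 0)"
  have f: "continuous_on UNIV f"
    unfolding f_def by (intro continuous_intros \<phi> continuous_on_compose2[OF \<phi>]) auto
  have deviation: "integral\<^sup>L (mE E) \<phi> - integral\<^sup>L (mE 1) \<phi>
      = orbit_integral E f / (2 * orbit_integral E (\<lambda>_. 1))" if E: "0 < E" "E \<noteq> 1" for E
  proof -
    have "continuous_on UNIV (\<lambda>x. \<phi> x + \<phi> (- x))"
      by (intro continuous_intros \<phi> continuous_on_compose2[OF \<phi>]) auto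
    then show ?thesis
      using integral_mE[OF E \<phi>] orbit_integral_diff_const[OF E, of _ "2 * \<phi> 0"] orbit_integral_one_pos[OF E]
      by (simp add: mE_def integral_return f_def field_simps)
  qed
  have "compact (f ` {0..3})"
    by (intro compact_continuous_image continuous_on_subset[OF f]) auto
  then obtain M where M: "\<And>y. y \<in> {0..3} \<Longrightarrow> \<bar>f y\<bar> \<le> M"
    by (meson bounded_real compact_imp_bounded image_eqI)
  show ?thesis
  proof (rule tendstoI)
    fix e :: real
    assume e: "0 < e"
    have "\<exists>\<epsilon>>0. \<forall>y. dist y 0 < \<epsilon> \<longrightarrow> dist (f y) (f 0) < e"
      using f e unfolding continuous_on_iff by blast
    moreover have "f 0 = 0"
      by (simp add: f_def)
    ultimately obtain \<epsilon> where \<epsilon>: "0 < \<epsilon>" and small: "\<And>y. \<bar>y\<bar> < \<epsilon> \<Longrightarrow> \<bar>f y\<bar> < e"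
      by (auto simp: dist_real_def)
    define C where "C = 4 * M / \<epsilon>"
    have "eventually (\<lambda>E. 0 < E \<and> E < 4 \<and> E \<noteq> 1) (at (1::real))"
      unfolding eventually_at by (intro exI[of _ 1]) (auto simp: dist_real_def)
    moreover have "eventually (\<lambda>E. C / e < orbit_integral E (\<lambda>_. 1)) (at 1)"
      using filterlim_orbit_integral_one_at_1 by (simp add: filterlim_at_top_dense)
    ultimately show "eventually (\<lambda>E. dist (integral\<^sup>L (mE E) \<phi>) (integral\<^sup>L (mE 1) \<phi>) < e) (at 1)"
    proof eventually_elim
      case (elim E)
      define T where "T = orbit_integral E (\<lambda>_. 1)"
      have T_pos: "0 < T"
        using orbit_integral_one_pos elim by (simp add: T_def)
      have T: "C < e * T"
        using elim e by (simp add: T_def field_simps)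
      have "\<bar>orbit_integral E f\<bar> \<le> e * T + C"
        unfolding T_def C_def using elim f \<epsilon> M small
        by (intro orbit_integral_abs_le) (auto simp: less_imp_le)
      also have "\<dots> < 2 * T * e"
        using T by (simp add: mult.commute)
      finally have "\<bar>orbit_integral E f\<bar> / (2 * T) < e"
        using T_pos by (simp add: divide_less_eq algebra_simps)
      then show ?case
        using deviation[of E] elim T_pos by (simp add: dist_real_def T_def)
    qed
  qed
qed

theorem proposition3p9:
  fixes \<phi> :: "real \<Rightarrow> real" and E0 :: real
  assumes "continuous_on UNIV \<phi>" and "E0 \<ge> 0"
  shows "((\<lambda>E. integral\<^sup>L (mE E) \<phi>) \<longlongrightarrow> integral\<^sup>L (mE E0) \<phi>)
           (at E0 within {0..})"
proof -
  consider "E0 < 1" | "E0 = 1" | "1 < E0"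
    by linarith
  then show ?thesis
  proof cases
    case 1
    then show ?thesis
      using tendsto_integral_mE_lt_1 assms by blast
  next
    case 2
    then show ?thesis
      using tendsto_integral_mE_at_1[OF assms(1)] by (auto intro: tendsto_within_subset)
  next
    case 3
    then show ?thesis
      using tendsto_integral_mE_gt_1 assms(1) by blast
  qed
qed

end
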